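(* Let $F$ be a commutative field. Then $\mathrm{PG}(4,F)$ admits no linear line partition.
   Context: A line spread of a projective space is a set of lines such that each point lies on exactly one of them. A line partition $\Omega$ of $\mathrm{PG}(n,F)$ is a partition of its set of lines into line spreads of hyperplanes such that each hyperplane contains exactly one of these spreads; $\pi_\Omega$ maps each line to the hyperplane containing its class. $\Omega$ is linear if $\pi_\Omega$ is a linear mapping from the Grassmannian of lines (points = lines of $\mathrm{PG}(n,F)$, G-lines = pencils of lines through a point in a plane) to the dual space $\mathrm{PG}(n,F)^*$; since $\pi_\Omega$ is everywhere defined, this means that every pencil of lines is mapped bijectively onto a pencil of hyperplanes through some $(n-2)$-subspace. *)

theory Defs
  imports "HOL-Analysis.Analysis"
begin

text \<open>PG(4,F) is modelled via the vector space F^5 (type 'a^5, 'a a field,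
  i.e. commutative). A projective subspace of projective dimension d is a
  linear subspace of vector dimension d+1.\<close>

definition pg_sub :: "nat \<Rightarrow> ('a::field ^ 5) set \<Rightarrow> bool" where
  "pg_sub d U \<longleftrightarrow> vec.subspace U \<and> vec.dim U = d + 1"

definition pg_point :: "('a::field ^ 5) set \<Rightarrow> bool" where
  "pg_point U \<longleftrightarrow> pg_sub 0 U"

definition pg_line :: "('a::field ^ 5) set \<Rightarrow> bool" where
  "pg_line U \<longleftrightarrow> pg_sub 1 U"

definition pg_plane :: "('a::field ^ 5) set \<Rightarrow> bool" where
  "pg_plane U \<longleftrightarrow> pg_sub 2 U"

definition pg_hyperplane :: "('a::field ^ 5) set \<Rightarrow> bool" where
  "pg_hyperplane U \<longleftrightarrow> pg_sub 3 U"

definition line_spread :: "('a::field ^ 5) set \<Rightarrow> ('a ^ 5) set set \<Rightarrow> bool" where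
  "line_spread H S \<longleftrightarrow>
     (\<forall>L\<in>S. pg_line L \<and> L \<subseteq> H) \<and>
     (\<forall>P. pg_point P \<and> P \<subseteq> H \<longrightarrow> (\<exists>!L. L \<in> S \<and> P \<subseteq> L))"

definition line_partition :: "('a::field ^ 5) set set set \<Rightarrow> bool" where
  "line_partition \<Omega> \<longleftrightarrow>
     (\<forall>S\<in>\<Omega>. S \<noteq> {}) \<and>
     \<Union>\<Omega> = {L. pg_line L} \<and>
     (\<forall>S\<in>\<Omega>. \<forall>T\<in>\<Omega>. S \<noteq> T \<longrightarrow> S \<inter> T = {}) \<and>
     (\<forall>S\<in>\<Omega>. \<exists>H. pg_hyperplane H \<and> line_spread H S) \<and>
     (\<forall>H. pg_hyperplane H \<longrightarrow> (\<exists>!S. S \<in> \<Omega> \<and> (\<forall>L\<in>S. L \<subseteq> H)))"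

definition pi_Omega :: "('a::field ^ 5) set set set \<Rightarrow> ('a ^ 5) set \<Rightarrow> ('a ^ 5) set" where
  "pi_Omega \<Omega> L = (THE H. pg_hyperplane H \<and> (\<exists>S\<in>\<Omega>. L \<in> S \<and> line_spread H S))"

definition line_pencil :: "('a::field ^ 5) set \<Rightarrow> ('a ^ 5) set \<Rightarrow> ('a ^ 5) set set" where
  "line_pencil P \<sigma> = {L. pg_line L \<and> P \<subseteq> L \<and> L \<subseteq> \<sigma>}"

definition hyperplane_pencil :: "('a::field ^ 5) set \<Rightarrow> ('a ^ 5) set set" where
  "hyperplane_pencil W = {H. pg_hyperplane H \<and> W \<subseteq> H}"

definition linear_line_partition :: "('a::field ^ 5) set set set \<Rightarrow> bool" where
  "linear_line_partition \<Omega> \<longleftrightarrow> line_partition \<Omega> \<and>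
     (\<forall>P \<sigma>. pg_point P \<and> pg_plane \<sigma> \<and> P \<subseteq> \<sigma> \<longrightarrow>
        (\<exists>W. pg_sub 2 W \<and> bij_betw (pi_Omega \<Omega>) (line_pencil P \<sigma>) (hyperplane_pencil W)))"

end

theory Submission
  imports Defs
begin

text \<open>In a linear line partition the images of the lines of a pencil (P, \<sigma>) are the
  hyperplanes through a plane W. If \<sigma> lies in the image of one line L0 of the pencil, every
  other line L of the pencil lies in W: otherwise W and L span the image of L, which would then
  coincide with the image of L0, against injectivity. Two such lines span both W and \<sigma>, so
  W = \<sigma> and \<sigma> lies in the image of every line of the pencil.

  Now let T \<noteq> L be lines of the spread S of a hyperplane H, take a \<in> T, b \<in> L and let M be
  the line ab. The planes \<langle>T, b\<rangle> and \<langle>L, a\<rangle> lie in H, the image of T and of L, hence by the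
  above in the image of M. So the image of M contains T and L, which span H; thus M belongs to
  S, although it meets T in a point without being T.\<close>

lemma dim_less_dim_Un:
  fixes W X :: "('a::field ^ 'n) set"
  assumes "vec.subspace W" "\<not> X \<subseteq> W"
  shows "vec.dim W < vec.dim (W \<union> X)"
proof (rule vec.dim_psubset)
  obtain x where "x \<in> X" "x \<notin> W" using assms(2) by blast
  moreover have "vec.span W = W" using assms(1) by simp
  ultimately show "vec.span W \<subset> vec.span (W \<union> X)"
    using vec.span_mono[of W "W \<union> X"] vec.span_base[of x "W \<union> X"] by blast
qed

lemma subspace_dim2_eq_span_pair:
  fixes L :: "('a::field ^ 'n) set"
  assumes L: "vec.subspace L" "vec.dim L = 2" and a: "a \<in> L" "a \<noteq> 0"
  obtains u where "u \<notin> vec.span {a}" "L = vec.span {a, u}"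
proof -
  have "\<not> L \<subseteq> vec.span {a}"
    using vec.dim_subset[of L "vec.span {a}"] L a by auto
  then obtain u where u: "u \<in> L" "u \<notin> vec.span {a}" by blast
  have "vec.span {a, u} = L"
  proof (rule vec.subspace_dim_equal)
    show "vec.span {a, u} \<subseteq> L" using L a u by (intro vec.span_minimal) auto
    show "vec.dim L \<le> vec.dim (vec.span {a, u})"
      using L a u by (simp add: insert_commute[of a u] vec.dim_insert)
  qed (use L in simp_all)
  then show ?thesis using that u by blast
qed

lemma pg_sub_eq_of_subset:
  fixes U V :: "('a::field ^ 5) set"
  assumes "pg_sub d V" "vec.subspace U" "U \<subseteq> V" "d + 1 \<le> vec.dim U"
  shows "U = V"
  using assms vec.subspace_dim_equal[of U V] unfolding pg_sub_def by simp

lemma pg_point_span_singleton: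
  fixes a :: "'a::field ^ 5"
  assumes "a \<noteq> 0"
  shows "pg_point (vec.span {a})"
  using assms unfolding pg_point_def pg_sub_def by simp

lemma pg_line_span_pair:
  fixes a b :: "'a::field ^ 5"
  assumes "a \<noteq> 0" "b \<notin> vec.span {a}"
  shows "pg_line (vec.span {a, b})"
  using assms unfolding pg_line_def pg_sub_def
  by (simp add: insert_commute[of a b] vec.dim_insert)

lemma pg_plane_span_triple:
  fixes a b c :: "'a::field ^ 5"
  assumes "a \<noteq> 0" "b \<notin> vec.span {a}" "c \<notin> vec.span {a, b}"
  shows "pg_plane (vec.span {a, b, c})"
proof -
  have "{a, b, c} = insert c (insert b {a})" by auto
  then show ?thesis
    using assms unfolding pg_plane_def pg_sub_def
    by (simp add: insert_commute[of a b] vec.dim_insert)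
qed

lemma line_pencil_span_pair:
  fixes a x :: "'a::field ^ 5"
  assumes "a \<noteq> 0" "x \<notin> vec.span {a}" "vec.subspace \<sigma>" "a \<in> \<sigma>" "x \<in> \<sigma>"
  shows "vec.span {a, x} \<in> line_pencil (vec.span {a}) \<sigma>"
  using assms pg_line_span_pair[of a x] vec.span_mono[of "{a}" "{a, x}"]
    vec.span_minimal[of "{a, x}" \<sigma>]
  unfolding line_pencil_def by auto

lemma line_spread_lines_eq:
  fixes H :: "('a::field ^ 5) set"
  assumes S: "line_spread H S" and L: "L \<in> S" "L' \<in> S"
    and a: "a \<in> L" "a \<in> L'" "a \<noteq> 0"
  shows "L = L'"
proof -
  have lines: "vec.subspace L" "vec.subspace L'" "L \<subseteq> H"
    using S L unfolding line_spread_def pg_line_def pg_sub_def by auto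
  then have "vec.span {a} \<subseteq> L" "vec.span {a} \<subseteq> L'" "vec.span {a} \<subseteq> H"
    using a by (simp_all add: vec.span_minimal subset_trans[of _ L H])
  then show ?thesis
    using S L pg_point_span_singleton[OF a(3)] unfolding line_spread_def by blast
qed

lemma line_spread_covers:
  fixes H :: "('a::field ^ 5) set"
  assumes S: "line_spread H S" and H: "pg_hyperplane H" and a: "a \<in> H" "a \<noteq> 0"
  obtains L where "L \<in> S" "a \<in> L"
proof -
  have "vec.span {a} \<subseteq> H"
    using H a unfolding pg_hyperplane_def pg_sub_def by (simp add: vec.span_minimal)
  then obtain L where "L \<in> S" "vec.span {a} \<subseteq> L"
    using S pg_point_span_singleton[OF a(2)] unfolding line_spread_def by blast
  then show ?thesis using that vec.span_base[of a "{a}"] by blast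
qed

lemma line_spread_hyperplane_unique:
  fixes H H' :: "('a::field ^ 5) set"
  assumes H: "pg_hyperplane H" "line_spread H S" and H': "pg_hyperplane H'" "line_spread H' S"
  shows "H = H'"
proof (rule pg_sub_eq_of_subset)
  show "H \<subseteq> H'"
  proof
    fix a assume "a \<in> H"
    show "a \<in> H'"
    proof (cases "a = 0")
      case True
      then show ?thesis using H' vec.subspace_0 unfolding pg_hyperplane_def pg_sub_def by blast
    next
      case False
      then obtain L where "L \<in> S" "a \<in> L" using line_spread_covers H \<open>a \<in> H\<close> by blast
      then show ?thesis using H'(2) unfolding line_spread_def by blast
    qed
  qed
qed (use H H' in \<open>auto simp: pg_hyperplane_def pg_sub_def\<close>)

lemma line_partitionD:
  fixes \<Omega> :: "('a::field ^ 5) set set set"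
  assumes "line_partition \<Omega>"
  shows line_partition_Union: "\<Union>\<Omega> = {L. pg_line L}"
    and line_partition_disjoint: "\<And>S T. S \<in> \<Omega> \<Longrightarrow> T \<in> \<Omega> \<Longrightarrow> S \<noteq> T \<Longrightarrow> S \<inter> T = {}"
    and line_partition_spread: "\<And>S. S \<in> \<Omega> \<Longrightarrow> \<exists>H. pg_hyperplane H \<and> line_spread H S"
    and line_partition_unique_class:
      "\<And>H. pg_hyperplane H \<Longrightarrow> \<exists>!S. S \<in> \<Omega> \<and> (\<forall>L\<in>S. L \<subseteq> H)"
  using assms unfolding line_partition_def by simp_all

lemma pi_Omega_eq:
  fixes \<Omega> :: "('a::field ^ 5) set set set"
  assumes \<Omega>: "line_partition \<Omega>" and S: "S \<in> \<Omega>" "L \<in> S"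
    and H: "pg_hyperplane H" "line_spread H S"
  shows "pi_Omega \<Omega> L = H"
  unfolding pi_Omega_def
proof (rule the_equality)
  show "pg_hyperplane H \<and> (\<exists>S\<in>\<Omega>. L \<in> S \<and> line_spread H S)" using S H by blast
next
  fix H' assume "pg_hyperplane H' \<and> (\<exists>S'\<in>\<Omega>. L \<in> S' \<and> line_spread H' S')"
  then obtain S' where H': "pg_hyperplane H'" "line_spread H' S'" and S': "S' \<in> \<Omega>" "L \<in> S'"
    by blast
  have "S' = S" using line_partition_disjoint[OF \<Omega> S(1) S'(1)] S S' by blast
  then show "H' = H" using line_spread_hyperplane_unique[of H' S H] H H' by simp
qed

lemma line_partition_class:
  fixes \<Omega> :: "('a::field ^ 5) set set set"
  assumes \<Omega>: "line_partition \<Omega>" and L: "pg_line L"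
  obtains S where "S \<in> \<Omega>" "L \<in> S"
    "pg_hyperplane (pi_Omega \<Omega> L)" "line_spread (pi_Omega \<Omega> L) S"
proof -
  obtain S where S: "S \<in> \<Omega>" "L \<in> S"
    using line_partition_Union[OF \<Omega>] L by blast
  moreover obtain H where H: "pg_hyperplane H" "line_spread H S"
    using line_partition_spread[OF \<Omega> S(1)] by blast
  moreover have "pi_Omega \<Omega> L = H" using pi_Omega_eq[OF \<Omega> S H] .
  ultimately show ?thesis using that by simp
qed

lemma mem_spread_of_pi_Omega_eq:
  fixes \<Omega> :: "('a::field ^ 5) set set set"
  assumes \<Omega>: "line_partition \<Omega>" and S: "S \<in> \<Omega>" "line_spread H S" and H: "pg_hyperplane H"
    and L: "pg_line L" "pi_Omega \<Omega> L = H"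
  shows "L \<in> S"
proof -
  obtain S' where S': "S' \<in> \<Omega>" "L \<in> S'" "line_spread H S'"
    using line_partition_class[OF \<Omega> L(1)] unfolding L(2) by blast
  have "\<forall>L\<in>S. L \<subseteq> H" "\<forall>L\<in>S'. L \<subseteq> H"
    using S S' unfolding line_spread_def by auto
  then have "S' = S"
    using line_partition_unique_class[OF \<Omega> H] S(1) S'(1) by (metis (no_types, lifting) ex1E)
  then show ?thesis using S' by simp
qed

lemma linear_pencil_plane_in_image:
  fixes \<Omega> :: "('a::field ^ 5) set set set"
  assumes lin: "linear_line_partition \<Omega>"
    and P: "pg_point P" "pg_plane \<sigma>" "P \<subseteq> \<sigma>"
    and pencil: "L0 \<in> line_pencil P \<sigma>" "L1 \<in> line_pencil P \<sigma>" "L2 \<in> line_pencil P \<sigma>"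
    and distinct: "L0 \<noteq> L1" "L0 \<noteq> L2" "L1 \<noteq> L2"
    and \<sigma>_L0: "\<sigma> \<subseteq> pi_Omega \<Omega> L0"
  shows "\<sigma> \<subseteq> pi_Omega \<Omega> L1"
proof -
  let ?\<pi> = "pi_Omega \<Omega>"
  have \<Omega>: "line_partition \<Omega>" using lin unfolding linear_line_partition_def by blast
  obtain W where W: "pg_sub 2 W" and bij: "bij_betw ?\<pi> (line_pencil P \<sigma>) (hyperplane_pencil W)"
    using lin P unfolding linear_line_partition_def by blast
  have W_sub: "vec.subspace W" "vec.dim W = 3" using W unfolding pg_sub_def by auto
  have image: "pg_sub 3 (?\<pi> L) \<and> W \<subseteq> ?\<pi> L \<and> L \<subseteq> ?\<pi> L \<and> pg_sub 1 L \<and> L \<subseteq> \<sigma>"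
    if "L \<in> line_pencil P \<sigma>" for L
  proof -
    have "pg_line L" "L \<subseteq> \<sigma>" using that unfolding line_pencil_def by auto
    moreover obtain S where "pg_hyperplane (?\<pi> L)" "L \<in> S" "line_spread (?\<pi> L) S"
      using line_partition_class[OF \<Omega> \<open>pg_line L\<close>] by metis
    moreover have "W \<subseteq> ?\<pi> L"
      using bij_betwE[OF bij] that unfolding hyperplane_pencil_def by blast
    ultimately show ?thesis unfolding line_spread_def pg_line_def pg_hyperplane_def by blast
  qed
  have in_W: "L \<subseteq> W" if L: "L \<in> line_pencil P \<sigma>" "L \<noteq> L0" for L
  proof (rule ccontr)
    assume "\<not> L \<subseteq> W"
    then have dim: "3 + 1 \<le> vec.dim (vec.span (W \<union> L))"
      using dim_less_dim_Un W_sub by fastforce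
    have "W \<union> L \<subseteq> ?\<pi> L" "W \<union> L \<subseteq> ?\<pi> L0"
      using image[OF L(1)] image[OF pencil(1)] \<sigma>_L0 by auto
    then have "vec.span (W \<union> L) \<subseteq> ?\<pi> L" "vec.span (W \<union> L) \<subseteq> ?\<pi> L0"
      using image[OF L(1)] image[OF pencil(1)] unfolding pg_sub_def
      by (simp_all add: vec.span_minimal)
    with dim have "?\<pi> L = ?\<pi> L0"
      using pg_sub_eq_of_subset[OF conjunct1[OF image[OF L(1)]] vec.subspace_span]
        pg_sub_eq_of_subset[OF conjunct1[OF image[OF pencil(1)]] vec.subspace_span] by metis
    then show False using bij L pencil(1) unfolding bij_betw_def inj_on_def by blast
  qed
  have "\<not> L2 \<subseteq> L1"
    using pg_sub_eq_of_subset[of 1 L1 L2] image[OF pencil(2)] image[OF pencil(3)] distinct(3)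
    unfolding pg_sub_def by auto
  then have dim: "2 + 1 \<le> vec.dim (vec.span (L1 \<union> L2))"
    using dim_less_dim_Un[of L1 L2] image[OF pencil(2)] unfolding pg_sub_def by fastforce
  have "L1 \<union> L2 \<subseteq> W" "L1 \<union> L2 \<subseteq> \<sigma>"
    using in_W[OF pencil(2)] in_W[OF pencil(3)] distinct image[OF pencil(2)] image[OF pencil(3)]
    by auto
  then have "vec.span (L1 \<union> L2) \<subseteq> W" "vec.span (L1 \<union> L2) \<subseteq> \<sigma>"
    using W_sub P(2) unfolding pg_plane_def pg_sub_def by (simp_all add: vec.span_minimal)
  with dim have "vec.span (L1 \<union> L2) = W" "vec.span (L1 \<union> L2) = \<sigma>"
    using pg_sub_eq_of_subset[OF W vec.subspace_span] pg_sub_eq_of_subset[of 2 \<sigma>] P(2)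
    unfolding pg_plane_def by simp_all
  then show ?thesis using image[OF pencil(2)] by simp
qed

lemma linear_plane_in_image_transfer:
  fixes \<Omega> :: "('a::field ^ 5) set set set"
  assumes lin: "linear_line_partition \<Omega>"
    and L: "pg_line L" and a: "a \<in> L" "a \<noteq> 0" and b: "b \<notin> L"
    and \<sigma>_L: "vec.span (insert b L) \<subseteq> pi_Omega \<Omega> L"
  shows "vec.span (insert b L) \<subseteq> pi_Omega \<Omega> (vec.span {a, b})"
proof -
  have L_sub: "vec.subspace L" "vec.dim L = 2" using L unfolding pg_line_def pg_sub_def by auto
  obtain u where u: "u \<notin> vec.span {a}" and L_eq: "L = vec.span {a, u}"
    using subspace_dim2_eq_span_pair[OF L_sub a] .
  let ?\<sigma> = "vec.span {a, u, b}"
  have "vec.span (insert b L) = vec.span (insert b {a, u})"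
    unfolding L_eq by (simp only: vec.span_insert[of b] vec.span_span)
  also have "insert b {a, u} = {a, u, b}" by auto
  finally have \<sigma>_eq: "vec.span (insert b L) = ?\<sigma>" .
  have b': "b \<notin> vec.span {a, u}" using b L_eq by simp
  have ub: "u + b \<notin> vec.span {a, u}"
    using b' vec.span_diff[of "u + b" "{a, u}" u] vec.span_base[of u "{a, u}"] by auto
  have span_a: "vec.span {a} \<subseteq> vec.span {a, u}" by (rule vec.span_mono) blast
  have in_\<sigma>: "a \<in> ?\<sigma>" "u \<in> ?\<sigma>" "b \<in> ?\<sigma>" "u + b \<in> ?\<sigma>"
    by (auto intro: vec.span_base vec.span_add)
  have pencil: "vec.span {a, x} \<in> line_pencil (vec.span {a}) ?\<sigma>"
    if "x \<notin> vec.span {a, u}" "x \<in> ?\<sigma>" for x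
    using line_pencil_span_pair[OF a(2) _ vec.subspace_span in_\<sigma>(1) that(2)] that(1) span_a
    by blast
  have L_pencil: "L \<in> line_pencil (vec.span {a}) ?\<sigma>"
    unfolding L_eq using line_pencil_span_pair[OF a(2) u vec.subspace_span in_\<sigma>(1,2)] .
  have "vec.span {a, b} \<noteq> vec.span {a, u + b}"
  proof
    assume eq: "vec.span {a, b} = vec.span {a, u + b}"
    then have "u \<in> vec.span {a, b}"
      using vec.span_diff[of "u + b" "{a, b}" b] vec.span_base[of "u + b" "{a, u + b}"]
        vec.span_base[of b "{a, b}"] by auto
    then have "L \<subseteq> vec.span {a, b}"
      unfolding L_eq by (simp add: vec.span_minimal vec.span_base)
    moreover have "pg_line (vec.span {a, b})"
      using pg_line_span_pair[OF a(2)] b' span_a by blast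
    ultimately have "L = vec.span {a, b}"
      using pg_sub_eq_of_subset[of 1 "vec.span {a, b}" L] L_sub unfolding pg_line_def by simp
    then show False using b vec.span_base[of b "{a, b}"] by simp
  qed
  moreover have "L \<noteq> vec.span {a, b}" "L \<noteq> vec.span {a, u + b}"
    using b ub L_eq vec.span_base[of b "{a, b}"] vec.span_base[of "u + b" "{a, u + b}"] by auto
  ultimately show ?thesis
    using linear_pencil_plane_in_image[OF lin pg_point_span_singleton[OF a(2)]
        pg_plane_span_triple[OF a(2) u b'] vec.span_mono L_pencil
        pencil[OF b' in_\<sigma>(3)] pencil[OF ub in_\<sigma>(4)]]
      \<sigma>_L \<sigma>_eq by auto
qed

lemma linear_pi_Omega_join_of_spread_lines:
  fixes \<Omega> :: "('a::field ^ 5) set set set"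
  assumes lin: "linear_line_partition \<Omega>"
    and S: "S \<in> \<Omega>" "line_spread H S" and H: "pg_hyperplane H"
    and lines: "T \<in> S" "L \<in> S" "T \<noteq> L"
    and a: "a \<in> T" "a \<noteq> 0" and b: "b \<in> L" "b \<noteq> 0"
  shows "pi_Omega \<Omega> (vec.span {a, b}) = H"
proof -
  let ?M = "vec.span {a, b}"
  have \<Omega>: "line_partition \<Omega>" using lin unfolding linear_line_partition_def by blast
  have T: "pg_line T" "T \<subseteq> H" "vec.subspace T" "vec.dim T = 2"
    and L: "pg_line L" "L \<subseteq> H" "vec.subspace L" "vec.dim L = 2"
    using S(2) lines unfolding line_spread_def pg_line_def pg_sub_def by auto
  have H_sub: "vec.subspace H" using H unfolding pg_hyperplane_def pg_sub_def by simp
  have meet: "T \<inter> L = {0}"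
    using line_spread_lines_eq[OF S(2) lines(1,2)] lines(3) T(3) L(3) vec.subspace_0 by blast
  then have "b \<notin> T" "a \<notin> L" using a b by auto
  have "vec.span (insert b T) \<subseteq> pi_Omega \<Omega> T"
    using pi_Omega_eq[OF \<Omega> S(1) lines(1) H S(2)] T(2) L(2) b(1) H_sub
    by (intro vec.span_minimal) auto
  then have \<sigma>_T: "vec.span (insert b T) \<subseteq> pi_Omega \<Omega> ?M"
    using linear_plane_in_image_transfer[OF lin T(1) a \<open>b \<notin> T\<close>] by blast
  have "vec.span (insert a L) \<subseteq> pi_Omega \<Omega> L"
    using pi_Omega_eq[OF \<Omega> S(1) lines(2) H S(2)] T(2) L(2) a(1) H_sub
    by (intro vec.span_minimal) auto
  then have \<sigma>_L: "vec.span (insert a L) \<subseteq> pi_Omega \<Omega> ?M"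
    using linear_plane_in_image_transfer[OF lin L(1) b \<open>a \<notin> L\<close>] by (simp add: insert_commute)
  have span_TL: "vec.span T = T" "vec.span L = L" using T(3) L(3) by simp_all
  have dim_TL: "vec.dim (vec.span (T \<union> L)) = 4"
    using vec.dim_sums_Int[OF T(3) L(3)] meet T(4) L(4) unfolding vec.span_Un span_TL by simp
  have "vec.span {a} \<subseteq> T" using a(1) T(3) by (simp add: vec.span_minimal)
  then have "pg_hyperplane (pi_Omega \<Omega> ?M)"
    using line_partition_class[OF \<Omega> pg_line_span_pair[OF a(2)]] \<open>b \<notin> T\<close> by blast
  then have M: "pg_sub 3 (pi_Omega \<Omega> ?M)" "vec.subspace (pi_Omega \<Omega> ?M)"
    unfolding pg_hyperplane_def pg_sub_def by auto
  have "T \<union> L \<subseteq> pi_Omega \<Omega> ?M"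
    using \<sigma>_T \<sigma>_L vec.span_superset[of "insert b T"] vec.span_superset[of "insert a L"] by blast
  then have "vec.span (T \<union> L) \<subseteq> pi_Omega \<Omega> ?M" using M(2) by (simp add: vec.span_minimal)
  moreover have "vec.span (T \<union> L) \<subseteq> H" using T(2) L(2) H_sub by (simp add: vec.span_minimal)
  ultimately have "vec.span (T \<union> L) = pi_Omega \<Omega> ?M" "vec.span (T \<union> L) = H"
    using pg_sub_eq_of_subset[OF M(1)] pg_sub_eq_of_subset[of 3 H] H dim_TL
    unfolding pg_hyperplane_def by simp_all
  then show ?thesis by simp
qed

theorem proposition7p3:
  fixes \<Omega> :: "('a::field ^ 5) set set set"
  shows "\<not> linear_line_partition \<Omega>"
proof
  assume lin: "linear_line_partition \<Omega>"
  then have \<Omega>: "line_partition \<Omega>" unfolding linear_line_partition_def by blast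
  have "2 \<le> vec.dim (UNIV :: ('a ^ 5) set)" using vec_dim_card[where 'a='a and 'n=5] by simp
  then obtain T :: "('a ^ 5) set" where T: "vec.subspace T" "vec.dim T = 2"
    using vec.choose_subspace_of_subspace by metis
  then have "pg_line T" unfolding pg_line_def pg_sub_def by simp
  define H where "H = pi_Omega \<Omega> T"
  obtain S where S: "S \<in> \<Omega>" "T \<in> S" and H: "pg_hyperplane H" "line_spread H S"
    using line_partition_class[OF \<Omega> \<open>pg_line T\<close>] unfolding H_def[symmetric] by blast
  have "\<not> T \<subseteq> {0}" using T(2) vec.dim_eq_0[of T] by simp
  then obtain a where a: "a \<in> T" "a \<noteq> 0" by blast
  have "\<not> H \<subseteq> T" using vec.dim_subset[of H T] H(1) T(2) unfolding pg_hyperplane_def pg_sub_def by auto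
  then obtain b where b: "b \<in> H" "b \<notin> T" by blast
  then have "b \<noteq> 0" using T(1) vec.subspace_0 by blast
  then obtain L where L: "L \<in> S" "b \<in> L" using line_spread_covers[OF H(2,1) b(1)] by blast
  then have "pi_Omega \<Omega> (vec.span {a, b}) = H"
    using linear_pi_Omega_join_of_spread_lines[OF lin S(1) H(2,1) S(2)] a b \<open>b \<noteq> 0\<close> by blast
  moreover have "b \<notin> vec.span {a}" using vec.span_minimal[of "{a}" T] T(1) a(1) b(2) by auto
  ultimately have "vec.span {a, b} \<in> S"
    using mem_spread_of_pi_Omega_eq[OF \<Omega> S(1) H(2,1) pg_line_span_pair[OF a(2)]] by blast
  then have "vec.span {a, b} = T"
    using line_spread_lines_eq[OF H(2) _ S(2)] a vec.span_base[of a "{a, b}"] by blast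
  then show False using b vec.span_base[of b "{a, b}"] by blast
qed

end
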